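(* Let ${\cal F}=(V,E)$ be a hypergraph with $V=[n]$ and all hyperedges in $E$ of size at most $d$. Let $q$ and $\chi$ be positive integers such that $1\leq q\leq |E|-1$ and $\chi=\min\{ |\bigcup_{i=1}^q e'_i\setminus e| : e,e'_1,\ldots,e'_q \text{ are } q+1 \text{ distinct hyperedges of } E\}$. Then, in the group testing model where exactly one hyperedge $e^*\in E$ is the defective (contaminated) set and a test on a pool $T\subseteq[n]$ is positive if and only if $T\cap e^*\neq\emptyset$, there exists a trivial two-stage group testing algorithm (two stages, each completely non-adaptive, with the second stage consisting only of tests on individual elements) that finds the defective hyperedge and uses a number of tests $t$ with $$ t< \frac {2e(d+\chi)}{\chi} \left(1+ \ln\left({d+\chi-1\choose d+\chi-d-1}\beta\right)\right)+dq,$$ where $\beta=\min\left\{e^q|E|\left({|E|-1\over q}\right)^q, e^{d+\chi-1}\left({n+d-1\over d+\chi-1}\right)^{d+\chi}\right\}$ and $e=2.7182\ldots$ is the base of the natural logarithm.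
   Context: Group testing in a hypergraph ${\cal F}=([n],E)$: the set of defective elements is one unknown hyperedge $e^*\in E$; a test on a pool of elements answers "yes" iff the pool contains at least one defective element. A two-stage algorithm consists of two stages, each a completely non-adaptive algorithm (all tests of a stage chosen beforehand); it is trivial if the second stage only tests individual elements. The first stage tests the pools given by the rows of a selector, after which at most $q$ candidate hyperedges remain, and the second stage individually tests their at most $dq$ vertices. *)

theory Defs
  imports Complex_Main
begin

definition test_result :: "nat set \<Rightarrow> nat set \<Rightarrow> bool" where
  "test_result T def \<longleftrightarrow> T \<inter> def \<noteq> {}"

definition stage1_outcome :: "nat set list \<Rightarrow> nat set \<Rightarrow> bool list" where
  "stage1_outcome Ts def = map (\<lambda>T. test_result T def) Ts"

text \<open>A trivial two-stage algorithm on V = {1..n} for hypergraph E: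
  stage 1 tests the pools Ts (fixed in advance); stage 2 tests individually the
  elements of S o (a set of vertices depending only on the stage-1 outcome o);
  the answers to stage 2 are exactly which of these elements are defective,
  i.e. S o \<inter> e*.\<close>
definition trivial_two_stage_alg ::
  "nat \<Rightarrow> nat set set \<Rightarrow> nat set list \<Rightarrow> (bool list \<Rightarrow> nat set)
     \<Rightarrow> (bool list \<Rightarrow> nat set \<Rightarrow> nat set) \<Rightarrow> bool" where
  "trivial_two_stage_alg n E Ts S dec \<longleftrightarrow>
     (\<forall>T\<in>set Ts. T \<subseteq> {1..n}) \<and>
     (\<forall>r. S r \<subseteq> {1..n}) \<and>
     (\<forall>e\<in>E. dec (stage1_outcome Ts e) (S (stage1_outcome Ts e) \<inter> e) = e)"

definition num_tests :: "nat set set \<Rightarrow> nat set list \<Rightarrow> (bool list \<Rightarrow> nat set) \<Rightarrow> nat" where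
  "num_tests E Ts S = length Ts + Max ((\<lambda>e. card (S (stage1_outcome Ts e))) ` E)"

end

theory Submission
  imports Defs
begin

text \<open>
  Say that a pool T separates a pair (e, Y) if it misses e and meets Y. If the first-stage pools
  separate (e, \<Union>S - e) for every hyperedge e and every set S of q other hyperedges, then at most q
  hyperedges are consistent with any first-stage outcome: if e and q others S shared an outcome,
  no pool could separate (e, \<Union>S - e). Testing the at most dq vertices of the consistent
  hyperedges individually then reveals e*.

  Pools separating every pair of a family R with |e| \<le> d and |Y| \<ge> \<chi> come from the probabilistic
  method: a random pool containing each vertex independently with probability 1/(d+1) separates
  a fixed pair with probability at least \<chi>/(e(d+\<chi>)), so some pool separates that fraction of
  the pairs not yet separated, and greedy choice handles R with about e(d+\<chi>)/\<chi> ln |R| pools.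
  The pairs are counted in two ways: as the pairs (e, \<Union>S - e) themselves, at most |E| C(|E|-1, q);
  or, shrinking \<Union>S - e to one of its \<chi>-subsets Y, as pairs (e, Y), at most C(n+d, d+\<chi>) C(d+\<chi>, \<chi>)
  by padding e to exactly d vertices. Either count is at most e B^2 for the argument B of the
  logarithm in the bound, and the factor 2 absorbs the square.
\<close>

section \<open>Random subsets\<close>

text \<open>The law of a random subset of U containing each element independently with probability p.\<close>

definition subset_weight :: "'a set \<Rightarrow> real \<Rightarrow> 'a set \<Rightarrow> real" where
  "subset_weight U p T = p ^ card T * (1 - p) ^ (card U - card T)"

lemma sum_Pow_power_card:
  fixes p r :: real
  assumes "finite W"
  shows "(\<Sum>T\<in>Pow W. p ^ card T * r ^ (card W - card T)) = (p + r) ^ card W"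
proof -
  have "(p + r) ^ card W = (\<Sum>T\<in>Pow W. (\<Prod>x\<in>T. p) * (\<Prod>x\<in>W - T. r))"
    using prod_add[OF assms, of "\<lambda>_. p" "\<lambda>_. r"] by simp
  also have "\<dots> = (\<Sum>T\<in>Pow W. p ^ card T * r ^ (card W - card T))"
    using assms by (intro sum.cong) (auto simp: card_Diff_subset finite_subset)
  finally show ?thesis ..
qed

lemma subset_weight_avoiding:
  assumes "finite U" "Z \<subseteq> U"
  shows "(\<Sum>T\<in>{T\<in>Pow U. T \<inter> Z = {}}. subset_weight U p T) = (1 - p) ^ card Z"
proof -
  have fin: "finite (U - Z)" using assms by auto
  have card_U: "card U = card Z + card (U - Z)"
    using assms by (simp add: card_Diff_subset card_mono finite_subset)
  have "{T\<in>Pow U. T \<inter> Z = {}} = Pow (U - Z)" by auto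
  then have "(\<Sum>T\<in>{T\<in>Pow U. T \<inter> Z = {}}. subset_weight U p T)
      = (\<Sum>T\<in>Pow (U - Z). (1 - p) ^ card Z * (p ^ card T * (1 - p) ^ (card (U - Z) - card T)))"
    using fin card_U
    by (intro sum.cong) (auto simp: subset_weight_def card_mono power_add[symmetric] Suc_diff_le)
  also have "\<dots> = (1 - p) ^ card Z"
    by (simp add: sum_distrib_left[symmetric] sum_Pow_power_card[OF fin])
  finally show ?thesis .
qed

lemma sum_subset_weight: "finite U \<Longrightarrow> (\<Sum>T\<in>Pow U. subset_weight U p T) = 1"
  using subset_weight_avoiding[of U "{}" p] by (simp add: Pow_def)

lemma subset_weight_nonneg: "0 \<le> p \<Longrightarrow> p \<le> 1 \<Longrightarrow> 0 \<le> subset_weight U p T"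
  by (simp add: subset_weight_def)

lemma subset_weight_avoiding_hitting:
  assumes "finite U" "e \<subseteq> U" "Y \<subseteq> U" "e \<inter> Y = {}"
  shows "(\<Sum>T\<in>{T\<in>Pow U. T \<inter> e = {} \<and> T \<inter> Y \<noteq> {}}. subset_weight U p T)
         = (1 - p) ^ card e * (1 - (1 - p) ^ card Y)"
proof -
  have split: "{T\<in>Pow U. T \<inter> e = {} \<and> T \<inter> Y \<noteq> {}}
      = {T\<in>Pow U. T \<inter> e = {}} - {T\<in>Pow U. T \<inter> (e \<union> Y) = {}}"
    by auto
  have "(\<Sum>T\<in>{T\<in>Pow U. T \<inter> e = {} \<and> T \<inter> Y \<noteq> {}}. subset_weight U p T)
      = (\<Sum>T\<in>{T\<in>Pow U. T \<inter> e = {}}. subset_weight U p T)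
        - (\<Sum>T\<in>{T\<in>Pow U. T \<inter> (e \<union> Y) = {}}. subset_weight U p T)"
    unfolding split using assms(1) by (intro sum_diff) auto
  also have "\<dots> = (1 - p) ^ card e - (1 - p) ^ card (e \<union> Y)"
    using assms subset_weight_avoiding[OF assms(1), of e] subset_weight_avoiding[OF assms(1), of "e \<union> Y"]
    by (simp only: Un_subset_iff)
  also have "card (e \<union> Y) = card e + card Y"
    using assms by (meson card_Un_disjoint finite_subset)
  finally show ?thesis by (simp add: power_add algebra_simps)
qed

lemma one_plus_inverse_power_le_exp:
  assumes "0 < d"
  shows "(1 + 1 / real d) ^ d \<le> exp 1"
proof -
  have "(1 + 1 / real d) ^ d \<le> exp (1 / real d) ^ d"
    by (intro power_mono) (auto simp: add.commute)
  also have "\<dots> = exp 1"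
    using assms by (simp add: exp_of_nat_mult[symmetric])
  finally show ?thesis .
qed

lemma avoid_hit_probability_bound:
  assumes "1 \<le> d"
  shows "real \<chi> / (exp 1 * real (d + \<chi>))
           \<le> (1 - 1 / real (d + 1)) ^ d * (1 - (1 - 1 / real (d + 1)) ^ \<chi>)"
proof -
  define r where "r = 1 + 1 / real d"
  have d_pos: "0 < real d"
    using assms by simp
  then have r_pos: "0 < r"
    unfolding r_def by (simp add: add_pos_pos)
  have r_inv: "1 - 1 / real (d + 1) = 1 / r"
    unfolding r_def using d_pos by (simp add: field_simps)
  have "1 / exp 1 \<le> (1 / r) ^ d"
    unfolding power_one_over r_def
    using one_plus_inverse_power_le_exp[of d] d_pos r_pos[unfolded r_def]
    by (intro divide_left_mono) auto
  moreover have "real \<chi> / real (d + \<chi>) \<le> 1 - (1 / r) ^ \<chi>"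
  proof -
    have "1 + real \<chi> / real d \<le> r ^ \<chi>"
      unfolding r_def using Bernoulli_inequality[of "1 / real d" \<chi>] by simp (simp add: order_trans[of _ 0])
    then have "(1 / r) ^ \<chi> \<le> 1 / (1 + real \<chi> / real d)"
      unfolding power_one_over using d_pos r_pos
      by (intro divide_left_mono) (auto intro!: mult_pos_pos add_pos_nonneg)
    also have "\<dots> = 1 - real \<chi> / real (d + \<chi>)"
      using d_pos by (simp add: field_simps)
    finally show ?thesis by simp
  qed
  ultimately have "1 / exp 1 * (real \<chi> / real (d + \<chi>)) \<le> (1 / r) ^ d * (1 - (1 / r) ^ \<chi>)"
    using r_pos by (intro mult_mono) auto
  then show ?thesis
    unfolding r_inv by simp
qed

section \<open>Greedy covering\<close>

lemma exists_le_weighted_average: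
  fixes w f :: "'a \<Rightarrow> real"
  assumes "finite \<Omega>" "\<And>x. x \<in> \<Omega> \<Longrightarrow> 0 \<le> w x" "sum w \<Omega> = 1"
  shows "\<exists>x\<in>\<Omega>. f x \<le> (\<Sum>y\<in>\<Omega>. w y * f y)"
proof -
  have "\<Omega> \<noteq> {}" using assms(3) by auto
  then obtain x where x: "x \<in> \<Omega>" "\<And>y. y \<in> \<Omega> \<Longrightarrow> f x \<le> f y"
    using arg_min_if_finite(1) arg_min_least assms(1) by metis
  have "f x = (\<Sum>y\<in>\<Omega>. w y * f x)" using assms(3) by (simp add: sum_distrib_right[symmetric])
  also have "\<dots> \<le> (\<Sum>y\<in>\<Omega>. w y * f y)" using assms(2) x(2) by (intro sum_mono mult_left_mono) auto
  finally show ?thesis using x(1) by blast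
qed

lemma exists_choice_missing_few:
  fixes w :: "'a \<Rightarrow> real" and cov :: "'a \<Rightarrow> 'b \<Rightarrow> bool"
  assumes \<Omega>: "finite \<Omega>" "\<And>x. x \<in> \<Omega> \<Longrightarrow> 0 \<le> w x" "sum w \<Omega> = 1"
    and R: "finite R" and P: "\<And>r. r \<in> R \<Longrightarrow> P \<le> sum w {x\<in>\<Omega>. cov x r}"
  shows "\<exists>x\<in>\<Omega>. real (card {r\<in>R. \<not> cov x r}) \<le> (1 - P) * card R"
proof -
  have missed: "sum w {x\<in>\<Omega>. \<not> cov x r} = 1 - sum w {x\<in>\<Omega>. cov x r}" for r
  proof -
    have "(\<Sum>x\<in>\<Omega>. w x * of_bool (cov x r)) + (\<Sum>x\<in>\<Omega>. w x * of_bool (\<not> cov x r)) = sum w \<Omega>"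
      by (simp add: sum.distrib[symmetric] flip: distrib_left) (intro sum.cong; simp)
    then show ?thesis using \<Omega> by (simp add: Collect_conj_eq Int_commute)
  qed
  have "(\<Sum>x\<in>\<Omega>. w x * real (card {r\<in>R. \<not> cov x r}))
      = (\<Sum>x\<in>\<Omega>. \<Sum>r\<in>R. w x * of_bool (\<not> cov x r))"
    using R by (simp add: sum_distrib_left[symmetric] Collect_conj_eq Int_commute)
  also have "\<dots> = (\<Sum>r\<in>R. sum w {x\<in>\<Omega>. \<not> cov x r})"
    using \<Omega>(1) by (subst sum.swap) (simp add: Collect_conj_eq Int_commute)
  also have "\<dots> \<le> (\<Sum>r\<in>R. 1 - P)"
    using P by (intro sum_mono) (simp add: missed)
  finally have "(\<Sum>x\<in>\<Omega>. w x * real (card {r\<in>R. \<not> cov x r})) \<le> (1 - P) * card R"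
    by (simp add: mult.commute)
  then show ?thesis
    using exists_le_weighted_average[OF \<Omega>, of "\<lambda>x. real (card {r\<in>R. \<not> cov x r})"] by force
qed

lemma greedy_choices_missing_few:
  fixes w :: "'a \<Rightarrow> real" and cov :: "'a \<Rightarrow> 'b \<Rightarrow> bool"
  assumes \<Omega>: "finite \<Omega>" "\<And>x. x \<in> \<Omega> \<Longrightarrow> 0 \<le> w x" "sum w \<Omega> = 1"
    and R: "finite R" and P: "\<And>r. r \<in> R \<Longrightarrow> P \<le> sum w {x\<in>\<Omega>. cov x r}" "P \<le> 1"
  shows "\<exists>xs. length xs = t \<and> set xs \<subseteq> \<Omega> \<and>
           real (card {r\<in>R. \<forall>x\<in>set xs. \<not> cov x r}) \<le> (1 - P) ^ t * card R"
proof (induction t)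
  case 0
  show ?case using R by (simp add: card_mono)
next
  case (Suc t)
  then obtain xs where xs: "length xs = t" "set xs \<subseteq> \<Omega>"
    "real (card {r\<in>R. \<forall>x\<in>set xs. \<not> cov x r}) \<le> (1 - P) ^ t * card R" by blast
  define R' where "R' = {r\<in>R. \<forall>x\<in>set xs. \<not> cov x r}"
  obtain x where x: "x \<in> \<Omega>" "real (card {r\<in>R'. \<not> cov x r}) \<le> (1 - P) * card R'"
    using exists_choice_missing_few[OF \<Omega>, of R' P cov] R P(1) unfolding R'_def by auto
  have "{r\<in>R. \<forall>y\<in>set (x # xs). \<not> cov y r} = {r\<in>R'. \<not> cov x r}"
    unfolding R'_def by auto
  moreover have "(1 - P) * card R' \<le> (1 - P) ^ Suc t * card R"
    using mult_left_mono[OF xs(3), of "1 - P"] P(2) unfolding R'_def by (simp add: mult.assoc)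
  ultimately show ?case
    using xs x by (intro exI[of _ "x # xs"]) auto
qed

lemma greedy_choices_missing_none:
  fixes w :: "'a \<Rightarrow> real" and cov :: "'a \<Rightarrow> 'b \<Rightarrow> bool"
  assumes \<Omega>: "finite \<Omega>" "\<And>x. x \<in> \<Omega> \<Longrightarrow> 0 \<le> w x" "sum w \<Omega> = 1"
    and R: "finite R" and P: "\<And>r. r \<in> R \<Longrightarrow> P \<le> sum w {x\<in>\<Omega>. cov x r}" "0 < P" "P \<le> 1"
  shows "\<exists>xs. set xs \<subseteq> \<Omega> \<and> (\<forall>r\<in>R. \<exists>x\<in>set xs. cov x r) \<and>
           real (length xs) \<le> ln (card R) / P + 1"
proof -
  define t where "t = nat \<lfloor>ln (card R) / P\<rfloor> + 1"
  have "0 \<le> ln (card R) / P"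
    using P(2) by (cases "card R = 0") auto
  then have t: "ln (card R) / P < t" "t \<le> ln (card R) / P + 1"
    unfolding t_def by (simp_all add: of_nat_nat) linarith+
  obtain xs where xs: "length xs = t" "set xs \<subseteq> \<Omega>"
    "real (card {r\<in>R. \<forall>x\<in>set xs. \<not> cov x r}) \<le> (1 - P) ^ t * card R"
    using greedy_choices_missing_few[of \<Omega> w R P cov t] assms by blast
  have "(1 - P) ^ t * card R < 1"
  proof (cases "card R = 0")
    case False
    have "(1 - P) ^ t \<le> exp (- P) ^ t"
      using P(3) by (intro power_mono) (auto simp: exp_ge_add_one_self[of "- P", simplified])
    also have "\<dots> = exp (- (P * t))"
      by (simp add: exp_of_nat_mult[symmetric] mult.commute)
    also have "\<dots> < exp (- ln (card R))"
      using t(1) P(2) by (simp add: divide_less_eq mult.commute)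
    finally show ?thesis
      using False by (simp add: exp_minus field_simps)
  qed simp
  then have "card {r\<in>R. \<forall>x\<in>set xs. \<not> cov x r} = 0"
    using xs(3) by linarith
  then have "{r\<in>R. \<forall>x\<in>set xs. \<not> cov x r} = {}"
    using R by simp
  then show ?thesis
    using xs t(2) by (intro exI[of _ xs]) auto
qed

section \<open>Separating pools\<close>

definition separates :: "'a set \<Rightarrow> 'a set \<Rightarrow> 'a set \<Rightarrow> bool" where
  "separates T e Y \<longleftrightarrow> T \<inter> e = {} \<and> T \<inter> Y \<noteq> {}"

definition separated_by :: "('a set \<times> 'a set) set \<Rightarrow> 'a set list \<Rightarrow> bool" where
  "separated_by R Ts \<longleftrightarrow> (\<forall>(e, Y)\<in>R. \<exists>T\<in>set Ts. separates T e Y)"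

lemma separated_byD: "separated_by R Ts \<Longrightarrow> (e, Y) \<in> R \<Longrightarrow> \<exists>T\<in>set Ts. separates T e Y"
  unfolding separated_by_def by blast

lemma separated_by_refinement:
  assumes "separated_by R' Ts" and "\<And>e Y. (e, Y) \<in> R \<Longrightarrow> \<exists>Y'\<subseteq>Y. (e, Y') \<in> R'"
  shows "separated_by R Ts"
  unfolding separated_by_def
proof clarify
  fix e Y assume "(e, Y) \<in> R"
  then obtain Y' where "Y' \<subseteq> Y" "(e, Y') \<in> R'"
    using assms(2) by blast
  then obtain T where "T \<in> set Ts" "separates T e Y'"
    using separated_byD[OF assms(1)] by blast
  with \<open>Y' \<subseteq> Y\<close> show "\<exists>T\<in>set Ts. separates T e Y"
    unfolding separates_def by blast
qed

lemma random_pool_separates: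
  assumes "finite U" "e \<subseteq> U" "Y \<subseteq> U" "e \<inter> Y = {}" "card e \<le> d" "\<chi> \<le> card Y" "1 \<le> d"
  shows "real \<chi> / (exp 1 * real (d + \<chi>))
           \<le> sum (subset_weight U (1 / real (d + 1))) {T\<in>Pow U. separates T e Y}"
proof -
  define p where "p = 1 / real (d + 1)"
  have p: "0 \<le> 1 - p" "1 - p \<le> 1" unfolding p_def by auto
  have "real \<chi> / (exp 1 * real (d + \<chi>)) \<le> (1 - p) ^ d * (1 - (1 - p) ^ \<chi>)"
    unfolding p_def using avoid_hit_probability_bound[OF assms(7)] .
  also have "\<dots> \<le> (1 - p) ^ card e * (1 - (1 - p) ^ card Y)"
    using p assms(5,6) by (intro mult_mono power_decreasing diff_left_mono) (auto simp: power_le_one)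
  also have "\<dots> = sum (subset_weight U p) {T\<in>Pow U. separates T e Y}"
    unfolding separates_def using subset_weight_avoiding_hitting[OF assms(1-4)] by simp
  finally show ?thesis unfolding p_def .
qed

lemma exp_one_mult_ratio_gt_one:
  assumes "0 < \<chi>"
  shows "1 < exp 1 * real (d + \<chi>) / real \<chi>"
proof -
  have "1 \<le> real (d + \<chi>) / real \<chi>"
    using assms by simp
  then have "exp 1 * 1 \<le> exp 1 * (real (d + \<chi>) / real \<chi>)"
    by (intro mult_left_mono) auto
  moreover have "1 < exp (1::real)"
    by simp
  ultimately show ?thesis
    by (metis mult_1_right order_less_le_trans times_divide_eq_right)
qed

lemma exists_separating_pools_ln_card:
  assumes U: "finite U" and R: "finite R"
    and valid: "\<And>e Y. (e, Y) \<in> R \<Longrightarrow> e \<subseteq> U \<and> Y \<subseteq> U \<and> e \<inter> Y = {} \<and> card e \<le> d \<and> \<chi> \<le> card Y"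
    and "1 \<le> d" "1 \<le> \<chi>"
  shows "\<exists>Ts. set Ts \<subseteq> Pow U \<and> separated_by R Ts \<and>
           real (length Ts) \<le> exp 1 * real (d + \<chi>) / real \<chi> * ln (card R) + 1"
proof -
  define a where "a = exp 1 * real (d + \<chi>) / real \<chi>"
  have "1 < a"
    unfolding a_def using \<open>1 \<le> \<chi>\<close> by (intro exp_one_mult_ratio_gt_one) simp
  have "1 / a \<le> sum (subset_weight U (1 / real (d + 1))) {T\<in>Pow U. separates T e Y}"
    if "(e, Y) \<in> R" for e Y
    unfolding a_def using valid[OF that] U \<open>1 \<le> d\<close> random_pool_separates[of U e Y d \<chi>] by simp
  then obtain Ts where Ts: "set Ts \<subseteq> Pow U" "\<forall>r\<in>R. \<exists>T\<in>set Ts. separates T (fst r) (snd r)"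
      "real (length Ts) \<le> ln (card R) / (1 / a) + 1"
    using greedy_choices_missing_none[of "Pow U" "subset_weight U (1 / real (d + 1))" R "1 / a"
        "\<lambda>T r. separates T (fst r) (snd r)"] U R \<open>1 < a\<close>
    by (force simp: sum_subset_weight subset_weight_nonneg)
  have "separated_by R Ts"
    unfolding separated_by_def case_prod_beta using Ts(2) by blast
  then show ?thesis
    using Ts(1,3) unfolding a_def by (auto simp: mult.commute)
qed

lemma ln_count_bound:
  fixes a B N :: real
  assumes "1 < a" "1 \<le> B" "0 \<le> N" "N \<le> exp 1 * B\<^sup>2"
  shows "a * ln N + 1 < 2 * a * (1 + ln B)"
proof -
  have "ln N \<le> 1 + 2 * ln B"
  proof (cases "N = 0")
    case False
    then have "ln N \<le> ln (exp 1 * B\<^sup>2)"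
      using assms by simp
    also have "\<dots> = 1 + 2 * ln B"
      using assms(2) by (simp add: ln_mult ln_realpow)
    finally show ?thesis .
  qed (use assms(2) in simp)
  then have "a * ln N + 1 \<le> a * (1 + 2 * ln B) + 1"
    using assms(1) by simp
  also have "\<dots> < 2 * a * (1 + ln B)"
    using assms(1,2) by (simp add: algebra_simps)
  finally show ?thesis .
qed

lemma exists_separating_pools_ln_bound:
  assumes "finite U" "finite R"
    and "\<And>e Y. (e, Y) \<in> R \<Longrightarrow> e \<subseteq> U \<and> Y \<subseteq> U \<and> e \<inter> Y = {} \<and> card e \<le> d \<and> \<chi> \<le> card Y"
    and "1 \<le> d" "1 \<le> \<chi>" and B: "1 \<le> B" "real (card R) \<le> exp 1 * B\<^sup>2"
  shows "\<exists>Ts. set Ts \<subseteq> Pow U \<and> separated_by R Ts \<and>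
           real (length Ts) < 2 * exp 1 * real (d + \<chi>) / real \<chi> * (1 + ln B)"
  using exists_separating_pools_ln_card[OF assms(1-5)] exp_one_mult_ratio_gt_one[of \<chi> d] \<open>1 \<le> \<chi>\<close>
    ln_count_bound[OF _ B(1) _ B(2), of "exp 1 * real (d + \<chi>) / real \<chi>"]
  by fastforce

section \<open>Binomial estimates\<close>

lemma power_div_fact_le_exp:
  fixes x :: real
  assumes "0 \<le> x"
  shows "x ^ k / fact k \<le> exp x"
proof -
  have "(\<Sum>i\<in>{k}. x ^ i / fact i) \<le> (\<Sum>i. x ^ i / fact i)"
    using assms summable_exp[of x] by (intro sum_le_suminf) (auto simp: divide_inverse mult.commute)
  then show ?thesis
    by (simp add: exp_def scaleR_conv_of_real divide_inverse mult.commute)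
qed

lemma binomial_le_exp_power:
  assumes "1 \<le> k"
  shows "real (N choose k) \<le> (exp 1 * real N / real k) ^ k"
proof -
  have "real (N choose k) * fact k \<le> real N ^ k"
    using binomial_fact_pow[of N k] by (metis of_nat_fact of_nat_le_iff of_nat_mult of_nat_power)
  moreover have "real k ^ k \<le> exp (real k) * fact k"
    using power_div_fact_le_exp[of "real k" k] by (simp add: divide_le_eq)
  ultimately have "real (N choose k) * real k ^ k \<le> real (N choose k) * fact k * exp (real k)"
    by (metis mult_left_mono of_nat_0_le_iff mult.assoc mult.commute)
  also have "\<dots> \<le> real N ^ k * exp (real k)"
    using \<open>real (N choose k) * fact k \<le> real N ^ k\<close> by (intro mult_right_mono) auto
  finally have "real (N choose k) * real k ^ k \<le> real N ^ k * exp (real k)" .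
  then show ?thesis
    using assms by (simp add: power_divide power_mult_distrib exp_of_nat_mult[symmetric] field_simps)
qed

lemma binomial_le_exp_power_pred:
  assumes "2 \<le> K" "K \<le> N"
  shows "real (N choose K) \<le> (exp 1 * ((real N - 1) / (real K - 1))) ^ K"
proof -
  have "real N / real K \<le> (real N - 1) / (real K - 1)"
    using assms by (simp add: field_simps)
  then have "exp 1 * real N / real K \<le> exp 1 * ((real N - 1) / (real K - 1))"
    by (metis mult_left_mono exp_ge_zero times_divide_eq_right)
  moreover have "real (N choose K) \<le> (exp 1 * real N / real K) ^ K"
    using assms by (intro binomial_le_exp_power) simp
  ultimately show ?thesis
    by (meson order_trans power_mono divide_nonneg_nonneg mult_nonneg_nonneg exp_ge_zero of_nat_0_le_iff)
qed

lemma Suc_binomial_le: "Suc m choose Suc k \<le> Suc m * (m choose k)"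
  by (metis Suc_times_binomial_eq le_add1 mult_Suc_right)

lemma mult_binomial_le_exp_power:
  assumes "1 \<le> q"
  shows "real (N * (N - 1 choose q)) \<le> exp (real q) * real N * ((real N - 1) / real q) ^ q"
proof (cases "N = 0")
  case False
  have "real (N - 1 choose q) \<le> (exp 1 * real (N - 1) / real q) ^ q"
    using binomial_le_exp_power[OF assms] .
  also have "\<dots> = exp (real q) * ((real N - 1) / real q) ^ q"
    using False by (simp add: of_nat_diff power_divide power_mult_distrib exp_of_nat_mult[symmetric])
  finally show ?thesis
    by (simp add: mult_left_mono mult.assoc mult.left_commute)
qed simp

lemma binomial_mult_binomial_le_exp_square:
  assumes "1 \<le> d" "1 \<le> \<chi>" "\<chi> \<le> n"
  shows "real (((n + d) choose (d + \<chi>)) * ((d + \<chi>) choose \<chi>))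
           \<le> exp 1 * (real ((d + \<chi> - 1) choose (d + \<chi> - d - 1)) *
                (exp (real (d + \<chi> - 1)) * ((real n + real d - 1) / real (d + \<chi> - 1)) ^ (d + \<chi>)))\<^sup>2"
proof -
  define m where "m = d + \<chi> - 1"
  define b where "b = real (m choose (\<chi> - 1))"
  define x where "x = (real n + real d - 1) / real m"
  have m: "d + \<chi> = Suc m" "d + \<chi> - d - 1 = \<chi> - 1" "\<chi> = Suc (\<chi> - 1)" "\<chi> - 1 \<le> m" "1 \<le> m"
    using assms unfolding m_def by auto
  have "1 \<le> b"
    unfolding b_def using m(4) by (simp add: Suc_le_eq)
  have "real m \<le> real n + real d - 1"
    using assms m(1) by linarith
  then have "1 \<le> x"
    unfolding x_def using m(5) by simp
  have "real ((n + d) choose Suc m) \<le> (exp 1 * x) ^ Suc m"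
    using binomial_le_exp_power_pred[of "Suc m" "n + d"] assms m(1,5) unfolding x_def by simp
  moreover have "real (Suc m choose \<chi>) \<le> real (Suc m) * b"
    unfolding b_def using Suc_binomial_le[of m "\<chi> - 1"] m(3) by (metis of_nat_le_iff of_nat_mult)
  ultimately have "real (((n + d) choose Suc m) * (Suc m choose \<chi>)) \<le> (exp 1 * x) ^ Suc m * (real (Suc m) * b)"
    unfolding of_nat_mult using \<open>1 \<le> x\<close> by (intro mult_mono) auto
  also have "\<dots> = exp 1 * exp (real m) * x ^ Suc m * real (Suc m) * b"
    by (simp add: power_mult_distrib exp_of_nat_mult[symmetric] exp_add[symmetric] mult_ac)
  also have "\<dots> \<le> exp 1 * exp (real m) * x ^ Suc m * exp (real m) * b"
    using exp_ge_add_one_self[of "real m"] \<open>1 \<le> b\<close> \<open>1 \<le> x\<close>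
    by (intro mult_left_mono mult_right_mono) (auto simp: add.commute)
  also have "\<dots> \<le> exp 1 * (b * (exp (real m) * x ^ Suc m))\<^sup>2"
  proof -
    have "x ^ Suc m \<le> x ^ Suc m * x ^ Suc m"
      using one_le_power[OF \<open>1 \<le> x\<close>, of "Suc m"] by (simp add: mult_le_cancel_left1)
    moreover have "b \<le> b * b"
      using \<open>1 \<le> b\<close> by (simp add: mult_le_cancel_left1)
    ultimately have "x ^ Suc m * b \<le> (x ^ Suc m * x ^ Suc m) * (b * b)"
      using \<open>1 \<le> b\<close> \<open>1 \<le> x\<close> by (intro mult_mono) auto
    then have "exp 1 * exp (real m) * exp (real m) * (x ^ Suc m * b)
        \<le> exp 1 * exp (real m) * exp (real m) * ((x ^ Suc m * x ^ Suc m) * (b * b))"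
      by (intro mult_left_mono) auto
    then show ?thesis
      by (simp add: power2_eq_square mult_ac)
  qed
  finally show ?thesis
    unfolding b_def x_def m_def using m by simp
qed

lemma le_exp_one_mult_square:
  fixes x :: real
  assumes "1 \<le> x"
  shows "x \<le> exp 1 * x\<^sup>2"
proof -
  have "x \<le> x\<^sup>2"
    using assms by (simp add: power2_eq_square)
  also have "\<dots> \<le> exp 1 * x\<^sup>2"
    using exp_ge_add_one_self[of "1::real"] by (simp add: mult_le_cancel_right1)
  finally show ?thesis .
qed

section \<open>Separation requirements of a hypergraph\<close>

lemma finite_subsets_with_card: "finite A \<Longrightarrow> finite {B. B \<subseteq> A \<and> card B = k}"
  by (rule finite_subset[of _ "Pow A"]) auto

text \<open>Pools separating all these pairs are the selector of the first stage.\<close>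

definition union_requirements :: "'a set set \<Rightarrow> nat \<Rightarrow> ('a set \<times> 'a set) set" where
  "union_requirements E q = {(e, \<Union>S - e) | e S. e \<in> E \<and> S \<subseteq> E \<and> e \<notin> S \<and> card S = q}"

lemma union_requirementsI:
  "e \<in> E \<Longrightarrow> S \<subseteq> E \<Longrightarrow> e \<notin> S \<Longrightarrow> card S = q \<Longrightarrow> (e, \<Union>S - e) \<in> union_requirements E q"
  unfolding union_requirements_def by blast

lemma union_requirementsE:
  assumes "(e, Y) \<in> union_requirements E q"
  obtains S where "e \<in> E" "S \<subseteq> E" "e \<notin> S" "card S = q" "Y = \<Union>S - e"
  using assms unfolding union_requirements_def by blast

lemma finite_union_requirements: "finite E \<Longrightarrow> finite (union_requirements E q)"
  by (rule finite_subset[of _ "(\<lambda>(e, S). (e, \<Union>S - e)) ` (E \<times> Pow E)"])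
    (auto simp: union_requirements_def)

lemma union_requirements_nonempty:
  assumes "finite E" "q < card E"
  shows "union_requirements E q \<noteq> {}"
proof -
  obtain e where "e \<in> E"
    using assms(2) by fastforce
  then have "q \<le> card (E - {e})"
    using assms by (simp add: card_Diff_singleton)
  then obtain S where "S \<subseteq> E - {e}" "card S = q"
    by (meson obtain_subset_with_card_n)
  then have "(e, \<Union>S - e) \<in> union_requirements E q"
    using \<open>e \<in> E\<close> by (intro union_requirementsI) auto
  then show ?thesis by blast
qed

lemma card_union_requirements_le:
  assumes "finite E"
  shows "card (union_requirements E q) \<le> card E * (card E - 1 choose q)"
proof -
  define D where "D = (SIGMA e:E. {S. S \<subseteq> E - {e} \<and> card S = q})"
  have "union_requirements E q = (\<lambda>(e, S). (e, \<Union>S - e)) ` D"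
    unfolding union_requirements_def D_def by auto
  moreover have "finite D"
    unfolding D_def using assms by (intro finite_SigmaI) (auto intro: finite_subsets_with_card)
  ultimately have "card (union_requirements E q) \<le> card D"
    by (simp add: card_image_le)
  also have "card D = (\<Sum>e\<in>E. card {S. S \<subseteq> E - {e} \<and> card S = q})"
    unfolding D_def using assms by (intro card_SigmaI) (auto intro: finite_subsets_with_card)
  also have "\<dots> = card E * (card E - 1 choose q)"
    using assms by (simp add: n_subsets card_Diff_singleton)
  finally show ?thesis .
qed

lemma card_union_requirements_bound:
  assumes "finite E" "1 \<le> q"
  shows "real (card (union_requirements E q))
           \<le> exp (real q) * real (card E) * ((real (card E) - 1) / real q) ^ q"
  using card_union_requirements_le[OF assms(1), of q] mult_binomial_le_exp_power[OF assms(2), of "card E"]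
  by (meson of_nat_le_iff order_trans)

lemma Min_union_requirements:
  assumes E: "E \<subseteq> Pow {1..n}" "finite E" "q < card E"
    and \<chi>: "\<chi> = Min {card (\<Union>S - e) | e S. e \<in> E \<and> S \<subseteq> E \<and> e \<notin> S \<and> card S = q}"
  shows "\<chi> \<le> n" and "\<And>e Y. (e, Y) \<in> union_requirements E q \<Longrightarrow> \<chi> \<le> card Y"
proof -
  let ?K = "{card (\<Union>S - e) | e S. e \<in> E \<and> S \<subseteq> E \<and> e \<notin> S \<and> card S = q}"
  have K_le_n: "k \<le> n" if k: "k \<in> ?K" for k
  proof -
    obtain e S where "k = card (\<Union>S - e)" "S \<subseteq> E"
      using k by blast
    moreover have "\<Union>S - e \<subseteq> {1..n}"
      using \<open>S \<subseteq> E\<close> E(1) by blast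
    ultimately show ?thesis
      using card_mono[of "{1..n}" "\<Union>S - e"] by simp
  qed
  have in_K: "card Y \<in> ?K" if "(e, Y) \<in> union_requirements E q" for e Y
    using that by (elim union_requirementsE) blast
  have "finite ?K"
    using K_le_n by (intro finite_subset[of ?K "{..n}"]) auto
  moreover obtain e Y where "(e, Y) \<in> union_requirements E q"
    using union_requirements_nonempty[OF E(2,3)] by auto
  then have "?K \<noteq> {}"
    using in_K by blast
  ultimately have "\<chi> \<in> ?K"
    unfolding \<chi> by (rule Min_in)
  then show "\<chi> \<le> n"
    by (rule K_le_n)
  show "\<chi> \<le> card Y" if "(e, Y) \<in> union_requirements E q" for e Y
    unfolding \<chi> using \<open>finite ?K\<close> in_K[OF that] by (rule Min_le)
qed

definition vertex_requirements :: "nat \<Rightarrow> nat set set \<Rightarrow> nat \<Rightarrow> (nat set \<times> nat set) set" where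
  "vertex_requirements n E \<chi> = {(e, Y). e \<in> E \<and> Y \<subseteq> {1..n} - e \<and> card Y = \<chi>}"

lemma finite_vertex_requirements: "finite E \<Longrightarrow> finite (vertex_requirements n E \<chi>)"
  by (rule finite_subset[of _ "E \<times> Pow {1..n}"]) (auto simp: vertex_requirements_def)

lemma card_vertex_requirements_le:
  assumes E: "\<forall>e\<in>E. e \<subseteq> {1..n} \<and> card e \<le> d"
  shows "card (vertex_requirements n E \<chi>) \<le> ((n + d) choose (d + \<chi>)) * ((d + \<chi>) choose \<chi>)"
proof -
  txt \<open>
    Padding e with the fresh vertices n + 1, ..., n + d - |e| turns (e, Y) into a (d + \<chi>)-subset
    of {1..n + d} with a marked \<chi>-subset Y; e is recovered as the unmarked part inside {1..n}.
  \<close>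
  define pad where "pad e = {n + 1..n + (d - card e)}" for e :: "nat set"
  define f where "f = (\<lambda>(e, Y). (e \<union> Y \<union> pad e, Y))"
  define Zs where "Zs = {Z. Z \<subseteq> {1..n + d} \<and> card Z = d + \<chi>}"
  define Tg where "Tg = (SIGMA Z:Zs. {Y. Y \<subseteq> Z \<and> card Y = \<chi>})"
  have "finite Zs"
    unfolding Zs_def by (intro finite_subsets_with_card) simp
  have finite_Z: "finite Z" if "Z \<in> Zs" for Z
    using that unfolding Zs_def by (auto intro: finite_subset)
  then have finite_candidates: "finite {Y. Y \<subseteq> Z \<and> card Y = \<chi>}" if "Z \<in> Zs" for Z
    using that by (simp add: finite_subsets_with_card)
  have "inj_on f (vertex_requirements n E \<chi>)"
  proof (rule inj_on_inverseI[where g = "\<lambda>(Z, Y). (Z \<inter> {1..n} - Y, Y)"], clarify)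
    fix e Y assume "(e, Y) \<in> vertex_requirements n E \<chi>"
    then show "(\<lambda>(Z, Y). (Z \<inter> {1..n} - Y, Y)) (f (e, Y)) = (e, Y)"
      using E unfolding vertex_requirements_def f_def pad_def by auto
  qed
  moreover have "f ` vertex_requirements n E \<chi> \<subseteq> Tg"
  proof (rule image_subsetI)
    fix r assume "r \<in> vertex_requirements n E \<chi>"
    then obtain e Y where r: "r = (e, Y)"
      and eY: "e \<subseteq> {1..n}" "card e \<le> d" "Y \<subseteq> {1..n} - e" "card Y = \<chi>"
      using E unfolding vertex_requirements_def by auto
    then have "finite e" "finite Y"
      by (auto intro: finite_subset)
    have "card (e \<union> Y \<union> pad e) = card (e \<union> Y) + card (pad e)"
      using \<open>finite e\<close> \<open>finite Y\<close> eY(1,3) by (intro card_Un_disjoint) (auto simp: pad_def)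
    also have "card (e \<union> Y) = card e + card Y"
      using \<open>finite e\<close> \<open>finite Y\<close> eY(3) by (intro card_Un_disjoint) auto
    finally have "card (e \<union> Y \<union> pad e) = d + \<chi>"
      using eY(2,4) unfolding pad_def by simp
    moreover have "e \<union> Y \<union> pad e \<subseteq> {1..n + d}"
      using eY unfolding pad_def by auto
    ultimately show "f r \<in> Tg"
      unfolding r f_def Tg_def Zs_def using eY(4) by auto
  qed
  moreover have "finite Tg"
    unfolding Tg_def using \<open>finite Zs\<close> finite_candidates by (rule finite_SigmaI)
  ultimately have "card (vertex_requirements n E \<chi>) \<le> card Tg"
    by (rule card_inj_on_le)
  also have "card Tg = (\<Sum>Z\<in>Zs. card {Y. Y \<subseteq> Z \<and> card Y = \<chi>})"
    unfolding Tg_def using \<open>finite Zs\<close> finite_candidates by (simp add: card_SigmaI)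
  also have "\<dots> = (\<Sum>Z\<in>Zs. (d + \<chi>) choose \<chi>)"
    using finite_Z by (intro sum.cong) (simp_all add: n_subsets Zs_def)
  also have "\<dots> = card Zs * ((d + \<chi>) choose \<chi>)"
    by simp
  also have "card Zs = (n + d) choose (d + \<chi>)"
    unfolding Zs_def using n_subsets[of "{1..n + d}" "d + \<chi>"] by simp
  finally show ?thesis .
qed

lemma card_vertex_requirements_bound:
  assumes "\<forall>e\<in>E. e \<subseteq> {1..n} \<and> card e \<le> d" "1 \<le> d" "1 \<le> \<chi>" "\<chi> \<le> n"
  shows "real (card (vertex_requirements n E \<chi>))
           \<le> exp 1 * (real ((d + \<chi> - 1) choose (d + \<chi> - d - 1)) *
                (exp (real (d + \<chi> - 1)) * ((real n + real d - 1) / real (d + \<chi> - 1)) ^ (d + \<chi>)))\<^sup>2"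
  using card_vertex_requirements_le[OF assms(1), of \<chi>] binomial_mult_binomial_le_exp_square[OF assms(2-4)]
  by (meson of_nat_le_iff order_trans)

lemma union_requirements_refine_vertex_requirements:
  assumes "E \<subseteq> Pow {1..n}" "(e, Y) \<in> union_requirements E q" "\<chi> \<le> card Y"
  shows "\<exists>Y'\<subseteq>Y. (e, Y') \<in> vertex_requirements n E \<chi>"
proof -
  obtain Y' where "Y' \<subseteq> Y" "card Y' = \<chi>"
    using assms(3) by (meson obtain_subset_with_card_n)
  obtain S where "e \<in> E" "S \<subseteq> E" "Y = \<Union>S - e"
    using assms(2) unfolding union_requirements_def by blast
  then have "Y \<subseteq> {1..n} - e"
    using assms(1) by blast
  with \<open>e \<in> E\<close> \<open>Y' \<subseteq> Y\<close> \<open>card Y' = \<chi>\<close> show ?thesis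
    unfolding vertex_requirements_def by blast
qed

lemma exists_separating_pools_via_union_requirements:
  fixes n :: nat
  assumes E: "\<forall>e\<in>E. e \<subseteq> {1..n} \<and> card e \<le> d" "finite E"
    and "1 \<le> q" "1 \<le> d" "1 \<le> \<chi>"
    and B: "exp (real q) * real (card E) * ((real (card E) - 1) / real q) ^ q \<le> B" "1 \<le> B"
    and \<chi>: "\<And>e Y. (e, Y) \<in> union_requirements E q \<Longrightarrow> \<chi> \<le> card Y"
  shows "\<exists>Ts. set Ts \<subseteq> Pow {1..n} \<and> separated_by (union_requirements E q) Ts \<and>
           real (length Ts) < 2 * exp 1 * real (d + \<chi>) / real \<chi> * (1 + ln B)"
proof -
  have valid: "e \<subseteq> {1..n} \<and> Y \<subseteq> {1..n} \<and> e \<inter> Y = {} \<and> card e \<le> d \<and> \<chi> \<le> card Y"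
    if "(e, Y) \<in> union_requirements E q" for e Y
    using that E(1) \<chi>[OF that] unfolding union_requirements_def by blast
  have "real (card (union_requirements E q)) \<le> exp 1 * B\<^sup>2"
    using card_union_requirements_bound[OF E(2) \<open>1 \<le> q\<close>] B le_exp_one_mult_square[OF B(2)]
    by linarith
  then show ?thesis
    using exists_separating_pools_ln_bound[OF finite_atLeastAtMost finite_union_requirements[OF E(2)]
        valid \<open>1 \<le> d\<close> \<open>1 \<le> \<chi>\<close> B(2)]
    by blast
qed

lemma exists_separating_pools_via_vertex_requirements:
  assumes E: "\<forall>e\<in>E. e \<subseteq> {1..n} \<and> card e \<le> d" "finite E"
    and "1 \<le> d" "1 \<le> \<chi>" "\<chi> \<le> n"
    and B: "real ((d + \<chi> - 1) choose (d + \<chi> - d - 1)) *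
              (exp (real (d + \<chi> - 1)) * ((real n + real d - 1) / real (d + \<chi> - 1)) ^ (d + \<chi>)) = B"
      "1 \<le> B"
    and \<chi>: "\<And>e Y. (e, Y) \<in> union_requirements E q \<Longrightarrow> \<chi> \<le> card Y"
  shows "\<exists>Ts. set Ts \<subseteq> Pow {1..n} \<and> separated_by (union_requirements E q) Ts \<and>
           real (length Ts) < 2 * exp 1 * real (d + \<chi>) / real \<chi> * (1 + ln B)"
proof -
  have valid: "e \<subseteq> {1..n} \<and> Y \<subseteq> {1..n} \<and> e \<inter> Y = {} \<and> card e \<le> d \<and> \<chi> \<le> card Y"
    if "(e, Y) \<in> vertex_requirements n E \<chi>" for e Y
    using that E(1) unfolding vertex_requirements_def by auto
  have "real (card (vertex_requirements n E \<chi>)) \<le> exp 1 * B\<^sup>2"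
    using card_vertex_requirements_bound[OF E(1) \<open>1 \<le> d\<close> \<open>1 \<le> \<chi>\<close> \<open>\<chi> \<le> n\<close>] B(1) by simp
  then obtain Ts where Ts: "set Ts \<subseteq> Pow {1..n}" "separated_by (vertex_requirements n E \<chi>) Ts"
      "real (length Ts) < 2 * exp 1 * real (d + \<chi>) / real \<chi> * (1 + ln B)"
    using exists_separating_pools_ln_bound[OF finite_atLeastAtMost finite_vertex_requirements[OF E(2)]
        valid \<open>1 \<le> d\<close> \<open>1 \<le> \<chi>\<close> B(2)]
    by blast
  moreover have "E \<subseteq> Pow {1..n}"
    using E(1) by auto
  then have "separated_by (union_requirements E q) Ts"
    using \<chi> by (intro separated_by_refinement[OF Ts(2)] union_requirements_refine_vertex_requirements)
  ultimately show ?thesis by blast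
qed

lemma exists_separating_pools_for_hypergraph:
  assumes E: "\<forall>e\<in>E. e \<subseteq> {1..n} \<and> card e \<le> d" and q: "1 \<le> q" "q < card E"
    and "1 \<le> d" "1 \<le> \<chi>"
    and \<chi>_def: "\<chi> = Min {card (\<Union>S - e) | e S. e \<in> E \<and> S \<subseteq> E \<and> e \<notin> S \<and> card S = q}"
  shows "\<exists>Ts. set Ts \<subseteq> Pow {1..n} \<and> separated_by (union_requirements E q) Ts \<and>
           real (length Ts) < 2 * exp 1 * real (d + \<chi>) / real \<chi> *
             (1 + ln (real ((d + \<chi> - 1) choose (d + \<chi> - d - 1)) *
                  min (exp (real q) * real (card E) * ((real (card E) - 1) / real q) ^ q)
                      (exp (real (d + \<chi> - 1)) * ((real n + real d - 1) / real (d + \<chi> - 1)) ^ (d + \<chi>))))"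
    (is "\<exists>Ts. _ \<and> _ \<and> _ < _ * (1 + ln (?b * min ?\<beta>\<^sub>1 ?\<beta>\<^sub>2))")
proof -
  have "E \<subseteq> Pow {1..n}" "finite E"
    using E finite_subset[of E "Pow {1..n}"] by auto
  note \<chi> = Min_union_requirements[OF this q(2) \<chi>_def]
  have "1 \<le> ?b"
    using \<open>1 \<le> \<chi>\<close> by (simp add: Suc_le_eq)
  have "1 \<le> ?\<beta>\<^sub>1"
    using q by (intro mult_ge1_I one_le_power) auto
  moreover have "1 \<le> ?\<beta>\<^sub>2"
    using \<open>1 \<le> d\<close> \<open>1 \<le> \<chi>\<close> \<chi>(1) by (intro mult_ge1_I one_le_power) (auto simp: le_divide_eq)
  ultimately have B: "1 \<le> ?b * min ?\<beta>\<^sub>1 ?\<beta>\<^sub>2"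
    using \<open>1 \<le> ?b\<close> by (intro mult_ge1_I) auto
  show ?thesis
  proof (cases "?\<beta>\<^sub>1 \<le> ?\<beta>\<^sub>2")
    case True
    then have "?\<beta>\<^sub>1 \<le> ?b * min ?\<beta>\<^sub>1 ?\<beta>\<^sub>2"
      using mult_right_mono[OF \<open>1 \<le> ?b\<close>, of ?\<beta>\<^sub>1] \<open>1 \<le> ?\<beta>\<^sub>1\<close> by simp
    then show ?thesis
      by (rule exists_separating_pools_via_union_requirements[OF E \<open>finite E\<close> q(1) \<open>1 \<le> d\<close> \<open>1 \<le> \<chi>\<close> _ B])
        (erule \<chi>(2))
  next
    case False
    then have "?b * ?\<beta>\<^sub>2 = ?b * min ?\<beta>\<^sub>1 ?\<beta>\<^sub>2"
      by simp
    then show ?thesis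
      by (rule exists_separating_pools_via_vertex_requirements[OF E \<open>finite E\<close> \<open>1 \<le> d\<close> \<open>1 \<le> \<chi>\<close> \<chi>(1) _ B])
        (erule \<chi>(2))
  qed
qed

section \<open>The two-stage algorithm\<close>

lemma card_same_outcome_le:
  assumes "finite E" "separated_by (union_requirements E q) Ts" "e \<in> E"
  shows "card {e'\<in>E. stage1_outcome Ts e' = stage1_outcome Ts e} \<le> q"
proof (rule ccontr)
  let ?C = "{e'\<in>E. stage1_outcome Ts e' = stage1_outcome Ts e}"
  assume "\<not> card ?C \<le> q"
  then have "q \<le> card (?C - {e})"
    using assms(1,3) by (simp add: card_Diff_singleton)
  then obtain S where S: "S \<subseteq> ?C - {e}" "card S = q"
    by (meson obtain_subset_with_card_n)
  then have "(e, \<Union>S - e) \<in> union_requirements E q"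
    using assms(3) by (intro union_requirementsI) auto
  then obtain T where T: "T \<in> set Ts" "separates T e (\<Union>S - e)"
    using separated_byD[OF assms(2)] by blast
  then obtain e' where e': "e' \<in> S" "T \<inter> e' \<noteq> {}"
    unfolding separates_def by blast
  have "stage1_outcome Ts e' = stage1_outcome Ts e"
    using S(1) e'(1) by blast
  then have "test_result T e' = test_result T e"
    using T(1) unfolding stage1_outcome_def by (simp add: map_eq_conv)
  then show False
    using T(2) e'(2) unfolding test_result_def separates_def by simp
qed

lemma two_stage_alg_from_separating_pools:
  assumes E: "\<forall>e\<in>E. e \<subseteq> {1..n} \<and> card e \<le> d" "E \<noteq> {}"
    and Ts: "set Ts \<subseteq> Pow {1..n}" "separated_by (union_requirements E q) Ts"
  shows "\<exists>S dec. trivial_two_stage_alg n E Ts S dec \<and> num_tests E Ts S \<le> length Ts + d * q"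
proof -
  define S where "S r = \<Union>{e\<in>E. stage1_outcome Ts e = r}" for r
  have "finite E"
    using E(1) finite_subset[of E "Pow {1..n}"] by auto
  have "card (S (stage1_outcome Ts e)) \<le> d * q" if "e \<in> E" for e
  proof -
    have "card (S (stage1_outcome Ts e)) \<le> (\<Sum>e'\<in>{e'\<in>E. stage1_outcome Ts e' = stage1_outcome Ts e}. card e')"
      unfolding S_def by (rule card_Union_le_sum_card)
    also have "\<dots> \<le> card {e'\<in>E. stage1_outcome Ts e' = stage1_outcome Ts e} * d"
      using E(1) by (intro sum_bounded_above[where 'a=nat, unfolded of_nat_id]) auto
    also have "\<dots> \<le> q * d"
      using card_same_outcome_le[OF \<open>finite E\<close> Ts(2) that] by simp
    finally show ?thesis by (simp add: mult.commute)
  qed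
  then have "num_tests E Ts S \<le> length Ts + d * q"
    unfolding num_tests_def using \<open>finite E\<close> E(2) by simp
  txt \<open>e* lies in S of its own outcome, so the positive individual tests are exactly e*.\<close>
  moreover have "trivial_two_stage_alg n E Ts S (\<lambda>_ A. A)"
    unfolding trivial_two_stage_alg_def S_def using E(1) Ts(1) by auto
  ultimately show ?thesis by blast
qed

lemma two_stage_alg_with_few_tests:
  assumes E: "\<forall>e\<in>E. e \<subseteq> {1..n} \<and> card e \<le> d" "E \<noteq> {}"
    and "\<exists>Ts. set Ts \<subseteq> Pow {1..n} \<and> separated_by (union_requirements E q) Ts \<and> real (length Ts) < t"
  shows "\<exists>Ts S dec. trivial_two_stage_alg n E Ts S dec \<and> real (num_tests E Ts S) < t + real (d * q)"
proof -
  obtain Ts where Ts: "set Ts \<subseteq> Pow {1..n}" "separated_by (union_requirements E q) Ts"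
      "real (length Ts) < t"
    using assms(3) by blast
  obtain S dec where alg: "trivial_two_stage_alg n E Ts S dec"
    and tests: "num_tests E Ts S \<le> length Ts + d * q"
    using two_stage_alg_from_separating_pools[OF E Ts(1,2)] by blast
  from tests have "real (num_tests E Ts S) \<le> real (length Ts) + real (d * q)"
    by (metis of_nat_add of_nat_le_iff)
  with alg Ts(3) show ?thesis
    by (intro exI[of _ Ts] exI[of _ S] exI[of _ dec]) simp
qed

lemma one_le_edge_size_bound:
  assumes "\<forall>e\<in>E. finite e \<and> card e \<le> d" "2 \<le> card E"
  shows "1 \<le> d"
proof (rule ccontr)
  assume "\<not> 1 \<le> d"
  have "e = {}" if "e \<in> E" for e
  proof -
    have "finite e" "card e \<le> d"
      using assms(1) that by auto
    then have "card e = 0"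
      using \<open>\<not> 1 \<le> d\<close> by linarith
    with \<open>finite e\<close> show ?thesis
      by simp
  qed
  then have "E \<subseteq> {{}}"
    by blast
  then have "card E \<le> 1"
    using card_mono[of "{{}}" E] by simp
  then show False
    using assms(2) by simp
qed

theorem theorem3:
  fixes n d q \<chi> :: nat and E :: "nat set set"
  assumes hyp: "\<forall>e\<in>E. e \<subseteq> {1..n} \<and> card e \<le> d"
    and q_pos: "1 \<le> q" and q_le: "q \<le> card E - 1"
    and chi_pos: "0 < \<chi>"
    and chi_def: "\<chi> = Min {card (\<Union>S - e) | e S. e \<in> E \<and> S \<subseteq> E \<and> e \<notin> S \<and> card S = q}"
  shows "\<exists>Ts S dec. trivial_two_stage_alg n E Ts S dec \<and>
     real (num_tests E Ts S) <
       2 * exp 1 * real (d + \<chi>) / real \<chi> *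
         (1 + ln (real ((d + \<chi> - 1) choose (d + \<chi> - d - 1)) *
                  min (exp (real q) * real (card E) * ((real (card E) - 1) / real q) ^ q)
                      (exp (real (d + \<chi> - 1)) *
                         ((real n + real d - 1) / real (d + \<chi> - 1)) ^ (d + \<chi>))))
       + real (d * q)"
proof -
  have "q < card E"
    using q_pos q_le by linarith
  then have "E \<noteq> {}"
    by auto
  have "1 \<le> d"
    using hyp \<open>q < card E\<close> q_pos
    by (intro one_le_edge_size_bound[of E]) (auto intro: finite_subset)
  have "1 \<le> \<chi>"
    using chi_pos by simp
  show ?thesis
    by (rule two_stage_alg_with_few_tests[OF hyp \<open>E \<noteq> {}\<close>
          exists_separating_pools_for_hypergraph[OF hyp q_pos \<open>q < card E\<close> \<open>1 \<le> d\<close> \<open>1 \<le> \<chi>\<close> chi_def]])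
qed

end
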